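(* Let $\mathbf a=(a_0,a_1,\dots)\in\mathbb{R}^{\mathbb{N}}$. The linear centrality $f^{\mathbf a}$ satisfies the density axiom if and only if $a_k> k(a_2-a_1)+(2a_1-a_2)$ for all integers $k\ge 3$.
   Context: Graphs are finite directed graphs; $d_G(x,y)$ is the shortest directed path length from $x$ to $y$ ($\infty$ if none). For $\mathbf a\in\mathbb{R}^{\mathbb{N}}$ the linear centrality is $f^{\mathbf a}_G(i)=\sum_{k\ge 0}|\{j: d_G(j,i)=k\}|\,a_k$ (only finite distances counted). For positive integers $k,p$: a $k$-clique is a set of $k$ nodes with arcs in both directions between every pair of distinct nodes; a directed $p$-cycle is a set of $p$ nodes $z_0,\dots,z_{p-1}$ with arcs $z_j\to z_{j+1 \bmod p}$. Let $x$ be a node of the $k$-clique and $y$ a node of the $p$-cycle; $S_{xy}$ is the disjoint union of the $k$-clique and the directed $p$-cycle together with the two arcs $x\to y$ and $y\to x$. A centrality $f$ satisfies the density axiom if for every $k\ge 3$, taking $p=k$, one has $f_{S_{xy}}(x)>f_{S_{xy}}(y)$. *)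

theory Defs
  imports Main "HOL-Library.Extended_Nat"
begin

definition graph_dist :: "('v \<times> 'v) set \<Rightarrow> 'v \<Rightarrow> 'v \<Rightarrow> enat" where
  "graph_dist E x y =
     (if \<exists>n. (x, y) \<in> E ^^ n then enat (LEAST n. (x, y) \<in> E ^^ n) else \<infinity>)"

definition lin_centrality :: "(nat \<Rightarrow> real) \<Rightarrow> 'v set \<Rightarrow> ('v \<times> 'v) set \<Rightarrow> 'v \<Rightarrow> real" where
  "lin_centrality a V E i =
     (\<Sum>k\<in>{k. \<exists>j\<in>V. graph_dist E j i = enat k}.
        real (card {j\<in>V. graph_dist E j i = enat k}) * a k)"

text \<open>The graph S_xy: k-clique on nodes Inl 0..Inl (k-1), directed p-cycle on nodes
  Inr 0..Inr (p-1) with arcs Inr j \<rightarrow> Inr ((j+1) mod p), plus arcs x \<leftrightarrow> y.\<close>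
definition S_nodes :: "nat \<Rightarrow> nat \<Rightarrow> (nat + nat) set" where
  "S_nodes k p = Inl ` {..<k} \<union> Inr ` {..<p}"

definition S_arcs :: "nat \<Rightarrow> nat \<Rightarrow> nat \<Rightarrow> nat \<Rightarrow> ((nat + nat) \<times> (nat + nat)) set" where
  "S_arcs k p x y =
     {(Inl i, Inl j) | i j. i < k \<and> j < k \<and> i \<noteq> j}
   \<union> {(Inr j, Inr ((j + 1) mod p)) | j. j < p}
   \<union> {(Inl x, Inr y), (Inr y, Inl x)}"

definition density_axiom :: "(nat \<Rightarrow> real) \<Rightarrow> bool" where
  "density_axiom a \<longleftrightarrow>
     (\<forall>k\<ge>3. \<forall>x<k. \<forall>y<k.
        lin_centrality a (S_nodes k k) (S_arcs k k x y) (Inl x)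
          > lin_centrality a (S_nodes k k) (S_arcs k k x y) (Inr y))"

end

theory Submission
  imports Defs
begin

text \<open>A node-potential D that drops by at most one along every arc, vanishes only at i, and
  can always be decreased by exactly one along some arc is the distance to i. In S_xy such
  potentials are explicit: clique nodes are at distance 1 from x and 2 from y (x itself at
  distance 1 from y), and the cycle node at cycle distance c from y is at distance c from y
  and c + 1 from x. Summing, f(x) - f(y) telescopes to a_p - (k (a_2 - a_1) + 2 a_1 - a_2),
  so for p = k the density axiom is exactly the stated inequality.\<close>

lemma relpow_potential_le:
  fixes D :: "'v \<Rightarrow> nat"
  assumes lipschitz: "\<And>u w. (u, w) \<in> E \<Longrightarrow> D u \<le> Suc (D w)"
    and "(j, t) \<in> E ^^ n"
  shows "D j \<le> n + D t"
  using assms(2)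
proof (induction n arbitrary: j)
  case (Suc n)
  then obtain w where "(j, w) \<in> E" "(w, t) \<in> E ^^ n"
    by (metis relpow_Suc_D2)
  with Suc.IH lipschitz show ?case by fastforce
qed simp

lemma relpow_potential_descent:
  fixes D :: "'v \<Rightarrow> nat"
  assumes descent: "\<And>j. j \<in> V \<Longrightarrow> D j \<noteq> 0 \<Longrightarrow> \<exists>w\<in>V. (j, w) \<in> E \<and> D j = Suc (D w)"
    and zero: "\<And>j. j \<in> V \<Longrightarrow> D j = 0 \<Longrightarrow> j = i"
    and "j \<in> V"
  shows "(j, i) \<in> E ^^ D j"
  using \<open>j \<in> V\<close>
proof (induction "D j" arbitrary: j)
  case 0
  then show ?case using zero by (metis relpow_0_I)
next
  case (Suc m)
  then obtain w where "w \<in> V" "(j, w) \<in> E" "D j = Suc (D w)"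
    using descent by (metis nat.distinct(1))
  with Suc show ?case by (metis relpow_Suc_I2 nat.inject)
qed

lemma graph_dist_eq_potential:
  fixes D :: "'v \<Rightarrow> nat"
  assumes lipschitz: "\<And>u w. (u, w) \<in> E \<Longrightarrow> D u \<le> Suc (D w)"
    and descent: "\<And>j. j \<in> V \<Longrightarrow> D j \<noteq> 0 \<Longrightarrow> \<exists>w\<in>V. (j, w) \<in> E \<and> D j = Suc (D w)"
    and zero: "\<And>j. j \<in> V \<Longrightarrow> D j = 0 \<longleftrightarrow> j = i"
    and "i \<in> V" "j \<in> V"
  shows "graph_dist E j i = enat (D j)"
proof -
  have path: "(j, i) \<in> E ^^ D j"
    using relpow_potential_descent[OF descent] zero \<open>j \<in> V\<close> by blast
  have "(LEAST n. (j, i) \<in> E ^^ n) = D j"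
  proof (rule Least_equality)
    fix n
    assume "(j, i) \<in> E ^^ n"
    then show "D j \<le> n"
      using relpow_potential_le[OF lipschitz] zero \<open>i \<in> V\<close> by fastforce
  qed (rule path)
  with path show ?thesis
    unfolding graph_dist_def by auto
qed

lemma lin_centrality_eq_sum_dist:
  assumes "finite V"
    and dist: "\<And>j. j \<in> V \<Longrightarrow> graph_dist E j i = enat (D j)"
  shows "lin_centrality a V E i = (\<Sum>j\<in>V. a (D j))"
proof -
  have dists: "{k. \<exists>j\<in>V. graph_dist E j i = enat k} = D ` V"
    using dist by auto
  have level: "{j\<in>V. graph_dist E j i = enat k} = {j\<in>V. D j = k}" for k
    using dist by auto
  have "(\<Sum>j\<in>V. a (D j)) = (\<Sum>k\<in>D ` V. \<Sum>j\<in>{j\<in>V. D j = k}. a (D j))"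
    by (rule sum.image_gen[OF \<open>finite V\<close>])
  also have "\<dots> = (\<Sum>k\<in>D ` V. real (card {j\<in>V. D j = k}) * a k)"
    by (rule sum.cong) auto
  finally show ?thesis
    unfolding lin_centrality_def dists level by simp
qed

lemma sum_lessThan_if_eq:
  fixes c d :: real
  assumes "x < k"
  shows "(\<Sum>i<k. if i = x then c else d) = c + (real k - 1) * d"
proof -
  have "(\<Sum>i<k. if i = x then c else d) = c + (\<Sum>i\<in>{..<k} - {x}. d)"
    using assms by (subst sum.remove[of _ x]) auto
  with assms show ?thesis
    by (simp add: of_nat_diff)
qed

definition cycle_dist :: "nat \<Rightarrow> nat \<Rightarrow> nat \<Rightarrow> nat" where
  "cycle_dist p m y = (if m \<le> y then y - m else y + p - m)"

lemma cycle_dist_eq_0_iff: "m < p \<Longrightarrow> y < p \<Longrightarrow> cycle_dist p m y = 0 \<longleftrightarrow> m = y"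
  unfolding cycle_dist_def by auto

lemma cycle_dist_Suc_mod:
  "m < p \<Longrightarrow> y < p \<Longrightarrow> m \<noteq> y \<Longrightarrow> cycle_dist p m y = Suc (cycle_dist p (Suc m mod p) y)"
  unfolding cycle_dist_def by (auto simp: mod_Suc)

lemma cycle_dist_le_Suc_mod:
  "m < p \<Longrightarrow> y < p \<Longrightarrow> cycle_dist p m y \<le> Suc (cycle_dist p (Suc m mod p) y)"
  by (cases "m = y") (simp_all add: cycle_dist_Suc_mod cycle_dist_def[of p y y])

lemma bij_betw_cycle_dist:
  assumes "y < p"
  shows "bij_betw (\<lambda>m. cycle_dist p m y) {..<p} {..<p}"
proof -
  have "inj_on (\<lambda>m. cycle_dist p m y) {..<p}"
    using assms unfolding inj_on_def cycle_dist_def by (auto split: if_splits)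
  moreover have "(\<lambda>m. cycle_dist p m y) ` {..<p} \<subseteq> {..<p}"
    using assms unfolding cycle_dist_def by auto
  ultimately show ?thesis
    by (simp add: bij_betw_def endo_inj_surj)
qed

lemma sum_cycle_dist:
  "y < p \<Longrightarrow> (\<Sum>m<p. g (cycle_dist p m y)) = (\<Sum>d<p. g d)"
  using sum.reindex_bij_betw[OF bij_betw_cycle_dist] by blast

lemma S_arcsE:
  assumes "(u, w) \<in> S_arcs k p x y"
  obtains (clique) i j where "u = Inl i" "w = Inl j" "i < k" "j < k" "i \<noteq> j"
  | (cycle) m where "u = Inr m" "w = Inr (Suc m mod p)" "m < p"
  | (to_cycle) "u = Inl x" "w = Inr y"
  | (to_clique) "u = Inr y" "w = Inl x"
  using assms unfolding S_arcs_def by auto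

lemma S_arcsI:
  "i < k \<Longrightarrow> j < k \<Longrightarrow> i \<noteq> j \<Longrightarrow> (Inl i, Inl j) \<in> S_arcs k p x y"
  "m < p \<Longrightarrow> (Inr m, Inr (Suc m mod p)) \<in> S_arcs k p x y"
  "(Inl x, Inr y) \<in> S_arcs k p x y"
  "(Inr y, Inl x) \<in> S_arcs k p x y"
  unfolding S_arcs_def by auto

lemma S_nodesE:
  assumes "j \<in> S_nodes k p"
  obtains (clique) i where "j = Inl i" "i < k"
  | (cycle) m where "j = Inr m" "m < p"
  using assms unfolding S_nodes_def by auto

lemma S_nodes_iff [simp]:
  "Inl i \<in> S_nodes k p \<longleftrightarrow> i < k"
  "Inr m \<in> S_nodes k p \<longleftrightarrow> m < p"
  unfolding S_nodes_def by auto

lemma finite_S_nodes: "finite (S_nodes k p)"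
  unfolding S_nodes_def by simp

lemma sum_S_nodes:
  "(\<Sum>j\<in>S_nodes k p. g j) = (\<Sum>i<k. g (Inl i)) + (\<Sum>m<p. g (Inr m))"
  unfolding S_nodes_def
  by (subst sum.union_disjoint) (auto simp: sum.reindex)

lemma graph_dist_S_clique_node:
  assumes "x < k" "y < p" "j \<in> S_nodes k p"
  shows "graph_dist (S_arcs k p x y) j (Inl x)
    = enat (case_sum (\<lambda>i. if i = x then 0 else 1) (\<lambda>m. Suc (cycle_dist p m y)) j)"
    (is "_ = enat (?D j)")
proof (rule graph_dist_eq_potential)
  fix u w
  assume "(u, w) \<in> S_arcs k p x y"
  then show "?D u \<le> Suc (?D w)"
    by (cases rule: S_arcsE) (use assms cycle_dist_le_Suc_mod in \<open>auto simp: cycle_dist_def\<close>)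
next
  fix j
  assume j: "j \<in> S_nodes k p" "?D j \<noteq> 0"
  from j(1) show "\<exists>w\<in>S_nodes k p. (j, w) \<in> S_arcs k p x y \<and> ?D j = Suc (?D w)"
  proof (cases rule: S_nodesE)
    case (clique i)
    with assms j show ?thesis
      by (intro bexI[of _ "Inl x"]) (auto simp: S_arcsI)
  next
    case (cycle m)
    show ?thesis
    proof (cases "m = y")
      case True
      with assms cycle show ?thesis
        by (intro bexI[of _ "Inl x"]) (auto simp: S_arcsI cycle_dist_def)
    next
      case False
      with assms cycle show ?thesis
        by (intro bexI[of _ "Inr (Suc m mod p)"]) (auto simp: S_arcsI cycle_dist_Suc_mod)
    qed
  qed
next
  fix j
  assume "j \<in> S_nodes k p"
  then show "?D j = 0 \<longleftrightarrow> j = Inl x"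
    by (cases rule: S_nodesE) auto
qed (use assms in auto)

lemma graph_dist_S_cycle_node:
  assumes "x < k" "y < p" "j \<in> S_nodes k p"
  shows "graph_dist (S_arcs k p x y) j (Inr y)
    = enat (case_sum (\<lambda>i. if i = x then 1 else 2) (\<lambda>m. cycle_dist p m y) j)"
    (is "_ = enat (?D j)")
proof (rule graph_dist_eq_potential)
  fix u w
  assume "(u, w) \<in> S_arcs k p x y"
  then show "?D u \<le> Suc (?D w)"
    by (cases rule: S_arcsE) (use assms cycle_dist_le_Suc_mod in \<open>auto simp: cycle_dist_def\<close>)
next
  fix j
  assume j: "j \<in> S_nodes k p" "?D j \<noteq> 0"
  from j(1) show "\<exists>w\<in>S_nodes k p. (j, w) \<in> S_arcs k p x y \<and> ?D j = Suc (?D w)"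
  proof (cases rule: S_nodesE)
    case (clique i)
    show ?thesis
    proof (cases "i = x")
      case True
      with assms clique show ?thesis
        by (intro bexI[of _ "Inr y"]) (auto simp: S_arcsI cycle_dist_def)
    next
      case False
      with assms clique show ?thesis
        by (intro bexI[of _ "Inl x"]) (auto simp: S_arcsI)
    qed
  next
    case (cycle m)
    with assms j have "m \<noteq> y"
      by (auto simp: cycle_dist_def)
    with assms cycle show ?thesis
      by (intro bexI[of _ "Inr (Suc m mod p)"]) (auto simp: S_arcsI cycle_dist_Suc_mod)
  qed
next
  fix j
  assume "j \<in> S_nodes k p"
  then show "?D j = 0 \<longleftrightarrow> j = Inr y"
    by (cases rule: S_nodesE) (use assms in \<open>auto simp: cycle_dist_eq_0_iff\<close>)
qed (use assms in auto)

lemma lin_centrality_S_clique_node: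
  assumes "x < k" "y < p"
  shows "lin_centrality a (S_nodes k p) (S_arcs k p x y) (Inl x)
    = a 0 + (real k - 1) * a 1 + (\<Sum>d<p. a (Suc d))"
proof -
  have "lin_centrality a (S_nodes k p) (S_arcs k p x y) (Inl x)
      = (\<Sum>i<k. if i = x then a 0 else a 1) + (\<Sum>m<p. a (Suc (cycle_dist p m y)))"
    using assms
    by (simp add: lin_centrality_eq_sum_dist[OF finite_S_nodes graph_dist_S_clique_node]
        sum_S_nodes if_distrib)
  then show ?thesis
    using assms by (simp add: sum_lessThan_if_eq sum_cycle_dist[where g = "\<lambda>d. a (Suc d)"])
qed

lemma lin_centrality_S_cycle_node:
  assumes "x < k" "y < p"
  shows "lin_centrality a (S_nodes k p) (S_arcs k p x y) (Inr y)
    = a 1 + (real k - 1) * a 2 + (\<Sum>d<p. a d)"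
proof -
  have "lin_centrality a (S_nodes k p) (S_arcs k p x y) (Inr y)
      = (\<Sum>i<k. if i = x then a 1 else a 2) + (\<Sum>m<p. a (cycle_dist p m y))"
    using assms
    by (simp add: lin_centrality_eq_sum_dist[OF finite_S_nodes graph_dist_S_cycle_node]
        sum_S_nodes if_distrib)
  then show ?thesis
    using assms by (simp add: sum_lessThan_if_eq sum_cycle_dist[where g = a])
qed

lemma lin_centrality_S_diff:
  assumes "x < k" "y < p"
  shows "lin_centrality a (S_nodes k p) (S_arcs k p x y) (Inl x)
       - lin_centrality a (S_nodes k p) (S_arcs k p x y) (Inr y)
       = a p - (real k * (a 2 - a 1) + (2 * a 1 - a 2))"
proof -
  have "(\<Sum>d<p. a (Suc d)) - (\<Sum>d<p. a d) = a p - a 0"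
    by (simp add: sum_lessThan_telescope sum_subtractf[symmetric])
  then show ?thesis
    unfolding lin_centrality_S_clique_node[OF assms] lin_centrality_S_cycle_node[OF assms]
    by (simp add: algebra_simps)
qed

theorem proposition1:
  fixes a :: "nat \<Rightarrow> real"
  shows "density_axiom a \<longleftrightarrow>
         (\<forall>k::nat. k \<ge> 3 \<longrightarrow> a k > real k * (a 2 - a 1) + (2 * a 1 - a 2))"
proof -
  let ?bound = "\<lambda>k. real k * (a 2 - a 1) + (2 * a 1 - a 2)"
  have "lin_centrality a (S_nodes k k) (S_arcs k k x y) (Inl x)
      > lin_centrality a (S_nodes k k) (S_arcs k k x y) (Inr y) \<longleftrightarrow> a k > ?bound k"
    if "x < k" "y < k" for k x y
    using lin_centrality_S_diff[OF that, of a] by linarith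
  then have "density_axiom a \<longleftrightarrow> (\<forall>k\<ge>3. \<forall>x<k. \<forall>y<k. a k > ?bound k)"
    unfolding density_axiom_def by simp
  also have "\<dots> \<longleftrightarrow> (\<forall>k::nat. k \<ge> 3 \<longrightarrow> a k > ?bound k)"
    by force
  finally show ?thesis .
qed

end
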